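(* If $V\subseteq\mathbb{R}$ is a Vitali set then $\mathbb{R}_V=\mathbb{R}$. If $M\subseteq\mathbb{R}$ is a multiplicative Vitali set then $\mathbb{R}_M=\mathbb{R}$.
   Context: A Vitali set is $V\subseteq\mathbb{R}$ such that for every $r\in\mathbb{R}$ there is $x\in V$ with $x-r\in\mathbb{Q}$, and for distinct $x,y\in V$, $x-y\notin\mathbb{Q}$. A multiplicative Vitali set is $M\subseteq\mathbb{R}$ such that for every $r\in\mathbb{R}\setminus\{0\}$ there is $x\in M$ with $x/r\in\mathbb{Q}$, and for distinct $x,y\in M$, $x/y\notin\mathbb{Q}$. For $A\subseteq\mathbb{R}$, $\mathbb{R}_A$ is the set of all reals Turing equivalent to some element of $A$. *)

theory Defs
  imports Complex_Main "HOL-Library.Nat_Bijection"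
begin

text \<open>Total functions nat^n -> nat that are recursive relative to an oracle A \<subseteq> nat
  (Kleene: closure of zero, successor, projections and the oracle's characteristic
  function under composition, primitive recursion and regular minimisation).
  A function of arity n is represented as nat list \<Rightarrow> nat, only its values on lists
  of length n matter.\<close>

inductive oracle_rec :: "nat set \<Rightarrow> nat \<Rightarrow> (nat list \<Rightarrow> nat) \<Rightarrow> bool" for A :: "nat set" where
  zero: "oracle_rec A n (\<lambda>xs. 0)"
| succ: "oracle_rec A 1 (\<lambda>xs. Suc (hd xs))"
| proj: "i < n \<Longrightarrow> oracle_rec A n (\<lambda>xs. xs ! i)"
| orac: "oracle_rec A 1 (\<lambda>xs. if hd xs \<in> A then 1 else 0)"
| comp: "oracle_rec A m g \<Longrightarrow> (\<forall>i<m. oracle_rec A n (hs i)) \<Longrightarrow>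
         oracle_rec A n (\<lambda>xs. g (map (\<lambda>i. hs i xs) [0..<m]))"
| prim: "oracle_rec A n g \<Longrightarrow> oracle_rec A (Suc (Suc n)) h \<Longrightarrow>
         oracle_rec A (Suc n) (\<lambda>xs. rec_nat (g (tl xs)) (\<lambda>y r. h (y # r # tl xs)) (hd xs))"
| mu:   "oracle_rec A (Suc n) g \<Longrightarrow> (\<forall>xs. length xs = n \<longrightarrow> (\<exists>y. g (y # xs) = 0)) \<Longrightarrow>
         oracle_rec A n (\<lambda>xs. LEAST y. g (y # xs) = 0)"
| ext:  "oracle_rec A n f \<Longrightarrow> (\<forall>xs. length xs = n \<longrightarrow> f' xs = f xs) \<Longrightarrow> oracle_rec A n f'"

definition turing_reducible :: "nat set \<Rightarrow> nat set \<Rightarrow> bool" where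
  "turing_reducible B A \<longleftrightarrow> oracle_rec A 1 (\<lambda>xs. if hd xs \<in> B then 1 else 0)"

definition rat_code :: "nat \<Rightarrow> real" where
  "rat_code n = real_of_int (int_decode (fst (prod_decode n))) / (real (snd (prod_decode n)) + 1)"

definition real_cut :: "real \<Rightarrow> nat set" where
  "real_cut x = {n. rat_code n < x}"

definition turing_equiv_real :: "real \<Rightarrow> real \<Rightarrow> bool" where
  "turing_equiv_real x y \<longleftrightarrow>
     turing_reducible (real_cut x) (real_cut y) \<and> turing_reducible (real_cut y) (real_cut x)"

definition reals_of :: "real set \<Rightarrow> real set" where
  "reals_of A = {y. \<exists>x\<in>A. turing_equiv_real y x}"

definition vitali_set :: "real set \<Rightarrow> bool" where
  "vitali_set V \<longleftrightarrow> (\<forall>r. \<exists>x\<in>V. x - r \<in> \<rat>) \<and>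
                     (\<forall>x\<in>V. \<forall>y\<in>V. x \<noteq> y \<longrightarrow> x - y \<notin> \<rat>)"

definition mult_vitali_set :: "real set \<Rightarrow> bool" where
  "mult_vitali_set M \<longleftrightarrow> M \<subseteq> - {0} \<and> (\<forall>r. r \<noteq> 0 \<longrightarrow> (\<exists>x\<in>M. x / r \<in> \<rat>)) \<and>
                     (\<forall>x\<in>M. \<forall>y\<in>M. x \<noteq> y \<longrightarrow> x / y \<notin> \<rat>)"

end

theory Submission
  imports Defs
begin

text \<open>Multiplying by a nonzero rational \<open>\<alpha>\<close> and adding a rational \<open>\<beta>\<close> preserves Turing degree:
  a code of a rational \<open>q\<close> is mapped computably to a code of \<open>(q - \<beta>) / \<alpha>\<close>, which many-one
  reduces the left cut of \<open>\<alpha> y + \<beta>\<close> to the cut of \<open>y\<close>, or to its complement when \<open>\<alpha> < 0\<close>,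
  because an irrational \<open>y\<close> never equals a rational (rational cuts are computable anyway).
  Every real \<open>r\<close> is \<open>x + (r - x)\<close> for some \<open>x\<close> in a Vitali set and \<open>(r / x) x\<close> for some \<open>x\<close>
  in a multiplicative Vitali set; for \<open>r = 0\<close> take the rational representative of \<open>\<rat>\<close>.\<close>

section \<open>Relative recursiveness of arithmetic\<close>

lemma oracle_rec_const: "oracle_rec A n (\<lambda>xs. c)"
proof (induction c)
  case 0
  show ?case by (rule oracle_rec.zero)
next
  case (Suc c)
  have "oracle_rec A n (\<lambda>xs. (\<lambda>ys. Suc (hd ys)) (map (\<lambda>i. c) [0..<1]))"
    by (rule oracle_rec.comp[OF oracle_rec.succ]) (use Suc in simp)
  then show ?case by simp
qed

lemma oracle_rec_hd: "oracle_rec A 1 hd"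
  by (rule oracle_rec.ext[OF oracle_rec.proj[of 0 1]]) (auto simp: length_Suc_conv)

lemma oracle_rec_comp1:
  assumes "oracle_rec A 1 (\<lambda>xs. g (hd xs))" and "oracle_rec A n f"
  shows "oracle_rec A n (\<lambda>xs. g (f xs))"
proof -
  have "oracle_rec A n (\<lambda>xs. (\<lambda>ys. g (hd ys)) (map (\<lambda>i. f xs) [0..<1]))"
    by (rule oracle_rec.comp[OF assms(1)]) (use assms(2) in simp)
  then show ?thesis by simp
qed

lemma oracle_rec_comp2:
  assumes "oracle_rec A 2 (\<lambda>xs. g (xs!0) (xs!1))" and "oracle_rec A n f1" and "oracle_rec A n f2"
  shows "oracle_rec A n (\<lambda>xs. g (f1 xs) (f2 xs))"
proof -
  have "oracle_rec A n
      (\<lambda>xs. (\<lambda>ys. g (ys!0) (ys!1)) (map (\<lambda>i. (if i = 0 then f1 else f2) xs) [0..<2]))"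
    by (rule oracle_rec.comp[OF assms(1)]) (use assms(2,3) in simp)
  then show ?thesis by (simp add: upt_rec)
qed

lemma oracle_rec_prim1:
  assumes "oracle_rec A 2 (\<lambda>xs. h (xs!0) (xs!1))"
    and "F 0 = c" and "\<And>x. F (Suc x) = h x (F x)"
  shows "oracle_rec A 1 (\<lambda>xs. F (hd xs))"
proof -
  have "oracle_rec A (Suc 0)
      (\<lambda>xs. rec_nat ((\<lambda>_. c) (tl xs)) (\<lambda>y r. (\<lambda>xs. h (xs!0) (xs!1)) (y # r # tl xs)) (hd xs))"
    by (rule oracle_rec.prim[OF oracle_rec_const]) (use assms(1) in \<open>simp add: numeral_2_eq_2\<close>)
  moreover have "rec_nat c h x = F x" for x
    by (induction x) (simp_all add: assms(2,3))
  ultimately show ?thesis by simp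
qed

lemma oracle_rec_prim2:
  assumes "oracle_rec A 1 (\<lambda>xs. g (hd xs))" and "oracle_rec A 3 (\<lambda>xs. h (xs!0) (xs!1) (xs!2))"
    and "\<And>y. F 0 y = g y" and "\<And>x y. F (Suc x) y = h x (F x y) y"
  shows "oracle_rec A 2 (\<lambda>xs. F (xs!0) (xs!1))"
proof -
  have "oracle_rec A (Suc 1) (\<lambda>xs. rec_nat ((\<lambda>xs. g (hd xs)) (tl xs))
      (\<lambda>y r. (\<lambda>xs. h (xs!0) (xs!1) (xs!2)) (y # r # tl xs)) (hd xs))"
    by (rule oracle_rec.prim[OF assms(1)])
      (use assms(2) in \<open>simp add: numeral_2_eq_2 numeral_3_eq_3\<close>)
  moreover have "rec_nat (g y) (\<lambda>x r. h x r y) x = F x y" for x y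
    by (induction x) (simp_all add: assms(3,4))
  ultimately show ?thesis unfolding numeral_2_eq_2 One_nat_def
    by (elim oracle_rec.ext) (auto simp: length_Suc_conv)
qed

lemma oracle_rec_mu1:
  assumes "oracle_rec A 2 (\<lambda>xs. g (xs!0) (xs!1))"
    and "\<And>y x. P y x \<longleftrightarrow> g y x = 0" and "\<And>x. \<exists>y. P y x"
  shows "oracle_rec A 1 (\<lambda>xs. LEAST y. P y (hd xs))"
proof -
  have "oracle_rec A 1 (\<lambda>xs. LEAST y. (\<lambda>xs. g (xs!0) (xs!1)) (y # xs) = 0)"
    by (rule oracle_rec.mu) (use assms in \<open>auto simp: numeral_2_eq_2 length_Suc_conv\<close>)
  then show ?thesis
    by (rule oracle_rec.ext) (auto simp: length_Suc_conv assms(2))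
qed

lemma oracle_rec_Suc: "oracle_rec A n f \<Longrightarrow> oracle_rec A n (\<lambda>xs. Suc (f xs))"
  using oracle_rec_comp1[of A Suc, OF oracle_rec.succ] .

lemma oracle_rec_add:
  "oracle_rec A n f \<Longrightarrow> oracle_rec A n g \<Longrightarrow> oracle_rec A n (\<lambda>xs. f xs + g xs)"
proof (rule oracle_rec_comp2[of A "(+)"])
  show "oracle_rec A 2 (\<lambda>xs. xs!0 + xs!1)"
    by (rule oracle_rec_prim2[of A "\<lambda>y. y" "\<lambda>x r y. Suc r"])
      (intro oracle_rec_hd oracle_rec_Suc oracle_rec.proj | simp)+
qed

lemma oracle_rec_mult:
  "oracle_rec A n f \<Longrightarrow> oracle_rec A n g \<Longrightarrow> oracle_rec A n (\<lambda>xs. f xs * g xs)"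
proof (rule oracle_rec_comp2[of A "(*)"])
  show "oracle_rec A 2 (\<lambda>xs. xs!0 * xs!1)"
    by (rule oracle_rec_prim2[of A "\<lambda>y. 0" "\<lambda>x r y. r + y"])
      (intro oracle_rec_const oracle_rec_add oracle_rec.proj | simp)+
qed

lemma oracle_rec_pred: "oracle_rec A n f \<Longrightarrow> oracle_rec A n (\<lambda>xs. f xs - 1)"
proof (rule oracle_rec_comp1[of A "\<lambda>x. x - 1"])
  show "oracle_rec A 1 (\<lambda>xs. hd xs - 1)"
    by (rule oracle_rec_prim1[of A "\<lambda>x r. x"]) (intro oracle_rec.proj | simp)+
qed

lemma oracle_rec_diff:
  "oracle_rec A n f \<Longrightarrow> oracle_rec A n g \<Longrightarrow> oracle_rec A n (\<lambda>xs. f xs - g xs)"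
proof (rule oracle_rec_comp2[of A "\<lambda>x y. y - x", of n g f])
  show "oracle_rec A 2 (\<lambda>xs. xs!1 - xs!0)"
    by (rule oracle_rec_prim2[of A "\<lambda>y. y" "\<lambda>x r y. r - 1"])
      (intro oracle_rec_hd oracle_rec_pred oracle_rec.proj | simp)+
qed

lemma oracle_rec_If_zero:
  assumes "oracle_rec A n f" and "oracle_rec A n g" and "oracle_rec A n h"
  shows "oracle_rec A n (\<lambda>xs. if f xs = 0 then g xs else h xs)"
proof -
  have "oracle_rec A n (\<lambda>xs. (1 - f xs) * g xs + (1 - (1 - f xs)) * h xs)"
    by (intro oracle_rec_add oracle_rec_mult oracle_rec_diff oracle_rec_const assms)
  then show ?thesis
    by (rule oracle_rec.ext) simp
qed

lemma oracle_rec_mem: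
  "oracle_rec A n f \<Longrightarrow> oracle_rec A n (\<lambda>xs. if f xs \<in> A then 1 else 0)"
  using oracle_rec_comp1[of A "\<lambda>x. if x \<in> A then 1 else 0", OF oracle_rec.orac] .

lemma oracle_rec_triangle: "oracle_rec A n f \<Longrightarrow> oracle_rec A n (\<lambda>xs. triangle (f xs))"
proof (rule oracle_rec_comp1[of A triangle])
  show "oracle_rec A 1 (\<lambda>xs. triangle (hd xs))"
    by (rule oracle_rec_prim1[of A "\<lambda>x r. r + Suc x"])
      (intro oracle_rec_add oracle_rec_Suc oracle_rec.proj | simp)+
qed

lemma oracle_rec_mod2: "oracle_rec A n f \<Longrightarrow> oracle_rec A n (\<lambda>xs. f xs mod 2)"
proof (rule oracle_rec_comp1[of A "\<lambda>x. x mod 2"])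
  show "oracle_rec A 1 (\<lambda>xs. hd xs mod 2)"
    by (rule oracle_rec_prim1[of A "\<lambda>x r. 1 - r"])
      (intro oracle_rec_diff oracle_rec_const oracle_rec.proj | simp add: mod_Suc)+
qed

lemma oracle_rec_div2: "oracle_rec A n f \<Longrightarrow> oracle_rec A n (\<lambda>xs. f xs div 2)"
proof (rule oracle_rec_comp1[of A "\<lambda>x. x div 2"])
  show "oracle_rec A 1 (\<lambda>xs. hd xs div 2)"
    by (rule oracle_rec_prim1[of A "\<lambda>x r. r + x mod 2"])
      (intro oracle_rec_add oracle_rec_mod2 oracle_rec.proj | simp add: div_Suc mod_Suc)+
qed

lemma prod_decode_sum_eq_Least:
  "fst (prod_decode n) + snd (prod_decode n) = (LEAST s. n < triangle (Suc s))"
proof -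
  obtain a b where ab: "prod_decode n = (a, b)" by (cases "prod_decode n")
  have n: "n = triangle (a + b) + a"
    using prod_decode_inverse[of n] by (simp add: ab prod_encode_def)
  have "(LEAST s. n < triangle (Suc s)) = a + b"
  proof (rule Least_equality)
    show "n < triangle (Suc (a + b))" using n by simp
    fix s assume "n < triangle (Suc s)"
    moreover have "triangle (Suc s) \<le> triangle (a + b)" if "Suc s \<le> a + b"
      using that by (induction rule: dec_induct) auto
    ultimately show "a + b \<le> s" using n by fastforce
  qed
  then show ?thesis by (simp add: ab)
qed

lemma oracle_rec_prod_decode_sum:
  "oracle_rec A n f \<Longrightarrow>
    oracle_rec A n (\<lambda>xs. fst (prod_decode (f xs)) + snd (prod_decode (f xs)))"
proof (rule oracle_rec_comp1[of A "\<lambda>x. fst (prod_decode x) + snd (prod_decode x)"])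
  show "oracle_rec A 1 (\<lambda>xs. fst (prod_decode (hd xs)) + snd (prod_decode (hd xs)))"
    unfolding prod_decode_sum_eq_Least
  proof (rule oracle_rec_mu1[of A "\<lambda>s x. Suc x - triangle (Suc s)"])
    show "oracle_rec A 2 (\<lambda>xs. Suc (xs!1) - triangle (Suc (xs!0)))"
      by (intro oracle_rec_diff oracle_rec_Suc oracle_rec_triangle oracle_rec.proj) simp_all
    show "\<exists>s. x < triangle (Suc s)" for x
      by (rule exI[of _ x]) simp
  qed linarith
qed

lemma prod_decode_eq_diff:
  "fst (prod_decode n) = n - triangle (fst (prod_decode n) + snd (prod_decode n))"
proof -
  obtain a b where ab: "prod_decode n = (a, b)" by (cases "prod_decode n")
  have "n - triangle (a + b) = a"
    using prod_decode_inverse[of n] by (simp add: ab prod_encode_def)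
  then show ?thesis by (simp add: ab)
qed

lemma oracle_rec_fst_prod_decode:
  "oracle_rec A n f \<Longrightarrow> oracle_rec A n (\<lambda>xs. fst (prod_decode (f xs)))"
  by (subst prod_decode_eq_diff)
    (intro oracle_rec_diff oracle_rec_triangle oracle_rec_prod_decode_sum)

lemma oracle_rec_snd_prod_decode:
  "oracle_rec A n f \<Longrightarrow> oracle_rec A n (\<lambda>xs. snd (prod_decode (f xs)))"
proof -
  assume "oracle_rec A n f"
  then have "oracle_rec A n (\<lambda>xs. (fst (prod_decode (f xs)) + snd (prod_decode (f xs)))
      - fst (prod_decode (f xs)))"
    by (intro oracle_rec_diff oracle_rec_prod_decode_sum oracle_rec_fst_prod_decode)
  then show ?thesis by simp
qed

lemma oracle_rec_prod_encode:
  "oracle_rec A n f \<Longrightarrow> oracle_rec A n g \<Longrightarrow> oracle_rec A n (\<lambda>xs. prod_encode (f xs, g xs))"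
  unfolding prod_encode_def by (simp, intro oracle_rec_add oracle_rec_triangle)

section \<open>Integer-valued functions\<close>

definition int_oracle_rec :: "nat set \<Rightarrow> nat \<Rightarrow> (nat list \<Rightarrow> int) \<Rightarrow> bool" where
  "int_oracle_rec A n F \<longleftrightarrow> oracle_rec A n (\<lambda>xs. int_encode (F xs))"

lemma oracle_rec_int_encode: "int_oracle_rec A n F \<Longrightarrow> oracle_rec A n (\<lambda>xs. int_encode (F xs))"
  by (simp add: int_oracle_rec_def)

text \<open>The case distinctions below test \<open>_ = 0\<close> so that \<open>oracle_rec_If_zero\<close> applies.\<close>

lemma int_encode_diff:
  "int_encode (int p - int q) = (if q - p = 0 then 2 * (p - q) else 2 * (q - p) - 1)"
  by (auto simp: int_encode_def sum_encode_def nat_diff_distrib)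

lemma int_oracle_rec_diff:
  "oracle_rec A n f \<Longrightarrow> oracle_rec A n g \<Longrightarrow> int_oracle_rec A n (\<lambda>xs. int (f xs) - int (g xs))"
  unfolding int_oracle_rec_def int_encode_diff
  by (intro oracle_rec_If_zero oracle_rec_diff oracle_rec_mult oracle_rec_const)

lemma nat_int_decode: "nat (int_decode e) = (if e mod 2 = 0 then e div 2 else 0)"
  by (auto simp: int_decode_def sum_decode_def)

lemma nat_uminus_int_decode: "nat (- int_decode e) = (if e mod 2 = 0 then 0 else Suc (e div 2))"
  by (auto simp: int_decode_def sum_decode_def odd_iff_mod_2_eq_one)

lemma oracle_rec_nat:
  assumes "int_oracle_rec A n F"
  shows "oracle_rec A n (\<lambda>xs. nat (F xs))" and "oracle_rec A n (\<lambda>xs. nat (- F xs))"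
proof -
  have e: "oracle_rec A n (\<lambda>xs. int_encode (F xs))"
    using assms by (simp add: int_oracle_rec_def)
  have "oracle_rec A n (\<lambda>xs. nat (int_decode (int_encode (F xs))))"
    unfolding nat_int_decode
    by (intro oracle_rec_If_zero oracle_rec_mod2 oracle_rec_div2 oracle_rec_const e)
  then show "oracle_rec A n (\<lambda>xs. nat (F xs))" by simp
  have "oracle_rec A n (\<lambda>xs. nat (- int_decode (int_encode (F xs))))"
    unfolding nat_uminus_int_decode
    by (intro oracle_rec_If_zero oracle_rec_mod2 oracle_rec_div2 oracle_rec_Suc oracle_rec_const e)
  then show "oracle_rec A n (\<lambda>xs. nat (- F xs))" by simp
qed

lemma int_oracle_rec_add:
  assumes "int_oracle_rec A n F" and "int_oracle_rec A n G"
  shows "int_oracle_rec A n (\<lambda>xs. F xs + G xs)"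
proof -
  have "int_oracle_rec A n (\<lambda>xs. int (nat (F xs) + nat (G xs)) - int (nat (- F xs) + nat (- G xs)))"
    by (intro int_oracle_rec_diff oracle_rec_add oracle_rec_nat assms)
  moreover have "int (nat x + nat y) - int (nat (- x) + nat (- y)) = x + y" for x y :: int
    by simp
  ultimately show ?thesis by simp
qed

lemma int_oracle_rec_mult:
  assumes "int_oracle_rec A n F" and "int_oracle_rec A n G"
  shows "int_oracle_rec A n (\<lambda>xs. F xs * G xs)"
proof -
  have "int_oracle_rec A n (\<lambda>xs.
      int (nat (F xs) * nat (G xs) + nat (- F xs) * nat (- G xs))
      - int (nat (F xs) * nat (- G xs) + nat (- F xs) * nat (G xs)))"
    by (intro int_oracle_rec_diff oracle_rec_add oracle_rec_mult oracle_rec_nat assms)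
  moreover have "int (nat x * nat y + nat (- x) * nat (- y))
      - int (nat x * nat (- y) + nat (- x) * nat y) = x * y" for x y :: int
    by (cases "x \<ge> 0"; cases "y \<ge> 0") (simp_all add: algebra_simps)
  ultimately show ?thesis by simp
qed

lemma int_oracle_rec_const: "int_oracle_rec A n (\<lambda>xs. c)"
  by (simp add: int_oracle_rec_def oracle_rec_const)

lemma int_oracle_rec_of_nat: "oracle_rec A n f \<Longrightarrow> int_oracle_rec A n (\<lambda>xs. int (f xs))"
  using int_oracle_rec_diff[of A n f "\<lambda>xs. 0"] by (simp add: oracle_rec_const)

lemma int_oracle_rec_int_decode: "oracle_rec A n f \<Longrightarrow> int_oracle_rec A n (\<lambda>xs. int_decode (f xs))"
  by (simp add: int_oracle_rec_def)

section \<open>Turing reducibility of cuts\<close>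

lemma oracle_rec_subst_oracle:
  assumes "oracle_rec B n f" and "turing_reducible B A"
  shows "oracle_rec A n f"
  using assms(1)
proof (induction rule: oracle_rec.induct)
  case orac
  show ?case using assms(2) by (simp add: turing_reducible_def)
qed (blast intro: oracle_rec.intros)+

lemma turing_reducible_trans:
  assumes "turing_reducible C B" and "turing_reducible B A"
  shows "turing_reducible C A"
  using assms(1) unfolding turing_reducible_def[of C]
  by (rule oracle_rec_subst_oracle[OF _ assms(2)])

lemma turing_reducible_many_one:
  assumes "oracle_rec A 1 (\<lambda>xs. g (hd xs))" and "\<And>n. n \<in> B \<longleftrightarrow> g n \<in> A"
  shows "turing_reducible B A"
  unfolding turing_reducible_def using oracle_rec_mem[OF assms(1)] by (simp add: assms(2))

lemma turing_reducible_Compl: "turing_reducible (- A) A"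
proof -
  have "oracle_rec A 1 (\<lambda>xs. 1 - (if hd xs \<in> A then 1 else 0))"
    by (intro oracle_rec_diff oracle_rec_const oracle_rec.orac)
  then show ?thesis
    unfolding turing_reducible_def by (rule oracle_rec.ext) simp
qed

text \<open>The second component of a code is the denominator minus one, hence \<open>d * m - 1\<close>.\<close>

definition rat_affine_code :: "int \<Rightarrow> int \<Rightarrow> nat \<Rightarrow> nat \<Rightarrow> nat" where
  "rat_affine_code k c m n =
    (let a = fst (prod_decode n); d = Suc (snd (prod_decode n))
     in prod_encode (int_encode (k * int_decode a + c * int d), d * m - 1))"

lemma oracle_rec_rat_affine_code: "oracle_rec A 1 (\<lambda>xs. rat_affine_code k c m (hd xs))"
  unfolding rat_affine_code_def Let_def
  by (intro oracle_rec_prod_encode oracle_rec_int_encode int_oracle_rec_add int_oracle_rec_mult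
      int_oracle_rec_const int_oracle_rec_int_decode int_oracle_rec_of_nat oracle_rec_pred
      oracle_rec_mult oracle_rec_Suc oracle_rec_const oracle_rec_fst_prod_decode
      oracle_rec_snd_prod_decode oracle_rec_hd)

lemma rat_code_rat_affine_code:
  assumes "m > 0"
  shows "rat_code (rat_affine_code k c m n) = (of_int k * rat_code n + of_int c) / of_nat m"
proof -
  obtain a b where ab: "prod_decode n = (a, b)" by (cases "prod_decode n")
  have "real (Suc b * m - 1) + 1 = real (Suc b) * real m"
    using assms by (simp add: of_nat_diff algebra_simps)
  then have "rat_code (rat_affine_code k c m n)
      = (of_int k * int_decode a + of_int c * real (Suc b)) / (real (Suc b) * real m)"
    by (simp add: rat_affine_code_def rat_code_def ab)
  also have "\<dots> = (of_int k * rat_code n + of_int c) / of_nat m"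
    using assms by (simp add: rat_code_def ab field_simps)
  finally show ?thesis .
qed

lemma rat_code_neg_iff: "rat_code n < 0 \<longleftrightarrow> fst (prod_decode n) mod 2 = 1"
proof -
  have "rat_code n < 0 \<longleftrightarrow> int_decode (fst (prod_decode n)) < 0"
    by (simp add: rat_code_def divide_less_0_iff add_pos_nonneg)
  also have "\<dots> \<longleftrightarrow> fst (prod_decode n) mod 2 = 1"
    by (auto simp: int_decode_def sum_decode_def odd_iff_mod_2_eq_one)
  finally show ?thesis .
qed

lemma Rats_common_denominator:
  assumes "u \<in> \<rat>" and "v \<in> \<rat>"
  obtains k c :: int and m :: nat
  where "m > 0" and "u = of_int k / of_nat m" and "v = of_int c / of_nat m"
proof -
  obtain a1 b1 where b1: "b1 > 0" and u: "u = of_int a1 / of_int b1"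
    using assms(1) by (elim Rats_cases') blast
  obtain a2 b2 where b2: "b2 > 0" and v: "v = of_int a2 / of_int b2"
    using assms(2) by (elim Rats_cases') blast
  show ?thesis
  proof
    show "nat (b1 * b2) > 0" using b1 b2 by simp
    show "u = of_int (a1 * b2) / of_nat (nat (b1 * b2))"
      using b1 b2 by (simp add: u)
    show "v = of_int (a2 * b1) / of_nat (nat (b1 * b2))"
      using b1 b2 by (simp add: v mult.commute)
  qed
qed

lemma rat_code_Rats: "rat_code n \<in> \<rat>"
  by (simp add: rat_code_def)

lemma turing_reducible_real_cut_Rats:
  assumes "r \<in> \<rat>"
  shows "turing_reducible (real_cut r) A"
proof -
  obtain c :: int and m :: nat where m: "m > 0" and r: "r = of_int c / of_nat m"
    using Rats_common_denominator[OF assms assms] by metis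
  define g where "g = rat_affine_code (int m) (- c) m"
  have "rat_code (g n) = rat_code n - r" for n
    using m by (simp add: g_def rat_code_rat_affine_code r field_simps)
  then have "n \<in> real_cut r \<longleftrightarrow> fst (prod_decode (g n)) mod 2 = 1" for n
    using rat_code_neg_iff[of "g n"] by (simp add: real_cut_def)
  then have "(if n \<in> real_cut r then 1 else 0) = fst (prod_decode (g n)) mod 2" for n
    using not_mod_2_eq_1_eq_0 by auto
  moreover have "oracle_rec A 1 (\<lambda>xs. fst (prod_decode (g (hd xs))) mod 2)"
    unfolding g_def by (intro oracle_rec_mod2 oracle_rec_fst_prod_decode oracle_rec_rat_affine_code)
  ultimately show ?thesis
    unfolding turing_reducible_def by simp
qed

lemma turing_reducible_real_cut_affine_irrational:
  assumes "\<alpha> \<in> \<rat>" and "\<alpha> \<noteq> 0" and "\<beta> \<in> \<rat>" and "y \<notin> \<rat>"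
  shows "turing_reducible (real_cut (\<alpha> * y + \<beta>)) (real_cut y)"
proof -
  have "1 / \<alpha> \<in> \<rat>" and "- \<beta> / \<alpha> \<in> \<rat>"
    using assms(1,3) by simp_all
  then obtain k c :: int and m :: nat where m: "m > 0"
    and k: "1 / \<alpha> = of_int k / of_nat m" and c: "- \<beta> / \<alpha> = of_int c / of_nat m"
    by (rule Rats_common_denominator)
  define g where "g = rat_affine_code k c m"
  have rec: "oracle_rec A 1 (\<lambda>xs. g (hd xs))" for A
    unfolding g_def by (rule oracle_rec_rat_affine_code)
  have g: "rat_code (g n) = (rat_code n - \<beta>) / \<alpha>" for n
  proof -
    have "rat_code (g n) = rat_code n * (of_int k / of_nat m) + of_int c / of_nat m"
      using m by (simp add: g_def rat_code_rat_affine_code add_divide_distrib)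
    also have "\<dots> = (rat_code n - \<beta>) / \<alpha>"
      by (simp only: k [symmetric] c [symmetric]) (simp add: diff_divide_distrib)
    finally show ?thesis .
  qed
  show ?thesis
  proof (cases "\<alpha> > 0")
    case True
    have "n \<in> real_cut (\<alpha> * y + \<beta>) \<longleftrightarrow> g n \<in> real_cut y" for n
      using True by (simp add: real_cut_def g pos_divide_less_eq algebra_simps)
    then show ?thesis by (rule turing_reducible_many_one[OF rec])
  next
    case False
    with assms(2) have "\<alpha> < 0" by simp
    have "n \<in> real_cut (\<alpha> * y + \<beta>) \<longleftrightarrow> g n \<in> - real_cut y" for n
    proof -
      have "n \<in> real_cut (\<alpha> * y + \<beta>) \<longleftrightarrow> y < rat_code (g n)"
        using \<open>\<alpha> < 0\<close> by (simp add: real_cut_def g neg_less_divide_eq algebra_simps)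
      also have "\<dots> \<longleftrightarrow> g n \<in> - real_cut y"
        using rat_code_Rats[of "g n"] assms(4) by (cases "rat_code (g n) = y") (auto simp: real_cut_def)
      finally show ?thesis .
    qed
    then have "turing_reducible (real_cut (\<alpha> * y + \<beta>)) (- real_cut y)"
      by (rule turing_reducible_many_one[OF rec])
    then show ?thesis
      using turing_reducible_Compl turing_reducible_trans by blast
  qed
qed

lemma turing_reducible_real_cut_affine:
  assumes "\<alpha> \<in> \<rat>" and "\<alpha> \<noteq> 0" and "\<beta> \<in> \<rat>"
  shows "turing_reducible (real_cut (\<alpha> * y + \<beta>)) (real_cut y)"
proof (cases "y \<in> \<rat>")
  case True
  with assms show ?thesis by (intro turing_reducible_real_cut_Rats) simp
next
  case False
  with assms show ?thesis by (rule turing_reducible_real_cut_affine_irrational)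
qed

lemma turing_equiv_real_affine:
  assumes "\<alpha> \<in> \<rat>" and "\<alpha> \<noteq> 0" and "\<beta> \<in> \<rat>"
  shows "turing_equiv_real (\<alpha> * y + \<beta>) y"
proof -
  have "turing_reducible (real_cut (1 / \<alpha> * (\<alpha> * y + \<beta>) + - \<beta> / \<alpha>))
      (real_cut (\<alpha> * y + \<beta>))"
    by (rule turing_reducible_real_cut_affine) (use assms in simp_all)
  moreover have "1 / \<alpha> * (\<alpha> * y + \<beta>) + - \<beta> / \<alpha> = y"
    using assms(2) by (simp add: field_simps)
  ultimately have "turing_reducible (real_cut y) (real_cut (\<alpha> * y + \<beta>))"
    by simp
  with turing_reducible_real_cut_affine[OF assms] show ?thesis
    by (simp add: turing_equiv_real_def)
qed

lemma reals_of_eq_UNIV_if_rational_affine_cover: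
  assumes "\<And>r. \<exists>x\<in>A. \<exists>\<alpha> \<beta>. \<alpha> \<in> \<rat> \<and> \<alpha> \<noteq> 0 \<and> \<beta> \<in> \<rat> \<and> r = \<alpha> * x + \<beta>"
  shows "reals_of A = UNIV"
proof -
  have "\<exists>x\<in>A. turing_equiv_real r x" for r
    using assms[of r] turing_equiv_real_affine by blast
  then show ?thesis by (auto simp: reals_of_def)
qed

lemma reals_of_vitali_set:
  assumes "vitali_set V"
  shows "reals_of V = UNIV"
proof (rule reals_of_eq_UNIV_if_rational_affine_cover)
  fix r
  obtain x where "x \<in> V" and "x - r \<in> \<rat>"
    using assms unfolding vitali_set_def by blast
  then have "1 \<in> \<rat> \<and> (1::real) \<noteq> 0 \<and> r - x \<in> \<rat> \<and> r = 1 * x + (r - x)"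
    using Rats_minus_iff[of "x - r"] by simp
  with \<open>x \<in> V\<close> show "\<exists>x\<in>V. \<exists>\<alpha> \<beta>. \<alpha> \<in> \<rat> \<and> \<alpha> \<noteq> 0 \<and> \<beta> \<in> \<rat> \<and> r = \<alpha> * x + \<beta>"
    by blast
qed

lemma reals_of_mult_vitali_set:
  assumes "mult_vitali_set M"
  shows "reals_of M = UNIV"
proof (rule reals_of_eq_UNIV_if_rational_affine_cover)
  fix r
  show "\<exists>x\<in>M. \<exists>\<alpha> \<beta>. \<alpha> \<in> \<rat> \<and> \<alpha> \<noteq> 0 \<and> \<beta> \<in> \<rat> \<and> r = \<alpha> * x + \<beta>"
  proof (cases "r = 0")
    case True
    obtain x where "x \<in> M" and "x / 1 \<in> \<rat>"
      using assms one_neq_zero unfolding mult_vitali_set_def by blast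
    then have "1 \<in> \<rat> \<and> (1::real) \<noteq> 0 \<and> - x \<in> \<rat> \<and> r = 1 * x + - x"
      using True by simp
    with \<open>x \<in> M\<close> show ?thesis by blast
  next
    case False
    then obtain x where "x \<in> M" and "x / r \<in> \<rat>" and "x \<noteq> 0"
      using assms unfolding mult_vitali_set_def by blast
    then have "r / x \<in> \<rat> \<and> r / x \<noteq> 0 \<and> 0 \<in> \<rat> \<and> r = r / x * x + 0"
      using False Rats_inverse[of "x / r"] by simp
    with \<open>x \<in> M\<close> show ?thesis by blast
  qed
qed

theorem mainTheorem8:
  shows "(\<forall>V. vitali_set V \<longrightarrow> reals_of V = UNIV) \<and>
         (\<forall>M. mult_vitali_set M \<longrightarrow> reals_of M = UNIV)"
  using reals_of_vitali_set reals_of_mult_vitali_set by blast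

end
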